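(* Let $R$ be a regular run and let $\alpha>0$ be a moment such that SafeToOpen fails at $\alpha-$ and holds at $\alpha$. Let $\beta=\sup\{t\ge\alpha:\ \text{SafeToOpen holds over }[\alpha,t]\}\in(\alpha,\infty]$. Then (1) Dir = close at $\alpha$; (2) Dir = open over $(\alpha,\beta]$ (over $(\alpha,\infty)$ if $\beta=\infty$) and, if $\beta<\infty$, also at $\beta+$.
   Context: Setting (evolving algebra for the railroad crossing). States are structures over a vocabulary containing: a finite universe Tracks; the reals and ExtendedReals $=\mathbb{R}\cup\{\infty\}$ with standard $<$ and $+$ ($\infty$ largest); a nullary real-valued symbol $\mathrm{CT}$ (current time); positive real constants $d_{close},d_{open},d_{min},d_{max}$ with $d_{close}<d_{min}\le d_{max}$; a unary function TrackStatus from Tracks to $\{\text{empty},\text{coming},\text{incrossing}\}$; a unary function Deadline from Tracks to ExtendedReals; a nullary Dir with values in $\{\text{open},\text{close}\}$; a nullary GateStatus with values in $\{\text{opened},\text{closed}\}$. Put $W=d_{min}-d_{close}$ and $\Delta_{close}=d_{close}+(d_{max}-d_{min})=d_{max}-W$. For a track $x$, $s(x)$ is the condition [$\mathrm{TrackStatus}(x)=\text{empty}$ or $\mathrm{CT}+d_{open}<\mathrm{Deadline}(x)$], and SafeToOpen is $\forall x\in\mathrm{Tracks}\ s(x)$. The program has two modules (agents). Gate: simultaneously OpenGate "if Dir=open then GateStatus:=opened" and CloseGate "if Dir=close then GateStatus:=closed". Controller: simultaneously, for every track $x$, SetDeadline$(x)$ "if TrackStatus$(x)$=coming and Deadline$(x)=\infty$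 then Deadline$(x):=\mathrm{CT}+W$", SignalClose$(x)$ "if $\mathrm{CT}=$Deadline$(x)$ then Dir:=close", ClearDeadline$(x)$ "if TrackStatus$(x)$=empty and Deadline$(x)<\infty$ then Deadline$(x):=\infty$", together with SignalOpen "if Dir=close and SafeToOpen then Dir:=open". Executing a module means computing all updates it generates in the current state and performing them simultaneously (nothing happens if the update set is inconsistent). A module is enabled at a state if its update set is consistent and contains an update that changes the state. TrackStatus is external (changed only by the environment); Deadline, Dir, GateStatus are internal (changed only by the modules); other symbols are static. Runs: for $t\mapsto R(t)$, $t\in[0,\infty)$, let $\rho(t)$ be the reduct of $R(t)$ without CT. $R$ is a pre-run if all $R(t)$ share a superuniverse, $\mathrm{CT}=t$ in $R(t)$, and for every $\tau>0$ there are $0=t_0<\dots<t_n=\tau$ with $\rho$ constant on each $(t_i,t_{i+1})$. For a term $e$ (free variables fixed), $e_t$ is its value in $R(t)$, $e_{t+}$ (resp. $e_{t-}$, $t>0$) its constant value on some $(t,t+\epsilon)$ (resp. $(t-\epsilon,t)$); likewise $\rho(t\pm)$. $e$ holds over an interval if it holds at each point; $e$ becomes (is set to) $a$ at $t$ if $e_{t-}\ne a=e_t$ or $e_t\neq a=e_{t+}$. A pre-run is a run if (i) whenever $\rho(t+)\neq\rho(t)$, $\rho(t+)$ is the CT-free reduct of the result of executing some modules at $R(t)$ (these agents fire at $t$), with external functions equal in $\rho(t)$ and $\rho(t+)$; (ii) whenever $t>0$ and $\rho(t)\ne\rho(t-)$, they differ only in external functions. An agent is immediate if it fires at every moment it is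 enabled; bounded if immediate or there is $b>0$ with no interval $(t,t+b)$ over which it is enabled but never fires. Initial states: TrackStatus$(x)$=empty and Deadline$(x)=\infty$ for every track $x$. A regular run is a run $R$ with $R(0)$ initial such that: (Train Motion) for each track $x$ there is a finite or infinite sequence $0=t_0<t_1<t_2<\cdots$ (the significant moments of $x$) with TrackStatus$(x)$=empty over each $[t_{3i},t_{3i+1})$, =coming over each $[t_{3i+1},t_{3i+2})$ where $d_{min}\le t_{3i+2}-t_{3i+1}\le d_{max}$, =incrossing over each $[t_{3i+2},t_{3i+3})$, and, if the sequence is finite with last element $t_k$, then $3\mid k$ and TrackStatus$(x)$=empty over $[t_k,\infty)$; (Controller Timing) Controller is immediate; (Gate Timing) Gate is bounded, there is no interval $(t,t+d_{close})$ over which Dir=close and GateStatus=opened both hold, and no interval $(t,t+d_{open})$ over which Dir=open and GateStatus=closed both hold. *)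

theory Defs
  imports "HOL-Analysis.Analysis" "HOL-Library.Extended_Real"
begin

datatype tstat = Empty | Coming | Incrossing
datatype dir = Open | Close
datatype gstat = Opened | Closed

text \<open>CT-free part of a state; Tracks is the finite type 'tr.
  ExtendedReals are represented by ereal (only reals and \<infinity> ever occur).\<close>
record 'tr state =
  TrackStatus :: "'tr \<Rightarrow> tstat"
  Deadline    :: "'tr \<Rightarrow> ereal"
  DirV        :: dir
  GateStatus  :: gstat

datatype 'tr upd = UDL 'tr ereal | UDir dir | UGS gstat
datatype 'tr loc = LDL 'tr | LDir | LGS

fun loc_of :: "'tr upd \<Rightarrow> 'tr loc" where
  "loc_of (UDL x v) = LDL x"
| "loc_of (UDir d) = LDir"
| "loc_of (UGS g) = LGS"

definition consistent :: "'tr upd set \<Rightarrow> bool" where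
  "consistent U \<longleftrightarrow> (\<forall>u\<in>U. \<forall>v\<in>U. loc_of u = loc_of v \<longrightarrow> u = v)"

definition apply_upd :: "'tr upd set \<Rightarrow> 'tr state \<Rightarrow> 'tr state" where
  "apply_upd U s = s\<lparr>
     Deadline := (\<lambda>x. if \<exists>v. UDL x v \<in> U then (THE v. UDL x v \<in> U) else Deadline s x),
     DirV := (if \<exists>d. UDir d \<in> U then (THE d. UDir d \<in> U) else DirV s),
     GateStatus := (if \<exists>g. UGS g \<in> U then (THE g. UGS g \<in> U) else GateStatus s)\<rparr>"

fun changes :: "'tr upd \<Rightarrow> 'tr state \<Rightarrow> bool" where
  "changes (UDL x v) s = (Deadline s x \<noteq> v)"
| "changes (UDir d) s = (DirV s \<noteq> d)"
| "changes (UGS g) s = (GateStatus s \<noteq> g)"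

text \<open>s(x) and SafeToOpen, evaluated at current time ct.\<close>
definition safe_track :: "real \<Rightarrow> real \<Rightarrow> 'tr state \<Rightarrow> 'tr \<Rightarrow> bool" where
  "safe_track d_open ct s x \<longleftrightarrow>
     TrackStatus s x = Empty \<or> ereal (ct + d_open) < Deadline s x"

definition SafeToOpen :: "real \<Rightarrow> real \<Rightarrow> ('tr::finite) state \<Rightarrow> bool" where
  "SafeToOpen d_open ct s \<longleftrightarrow> (\<forall>x. safe_track d_open ct s x)"

datatype agent = Gate | Controller

text \<open>Update sets generated by the modules in state (CT = ct, s).
  W = d_min - d_close.\<close>
definition gate_updates :: "('tr::finite) state \<Rightarrow> 'tr upd set" where
  "gate_updates s =
     {UGS Opened | _::unit. DirV s = Open} \<union> {UGS Closed | _::unit. DirV s = Close}"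

definition controller_updates ::
  "real \<Rightarrow> real \<Rightarrow> real \<Rightarrow> real \<Rightarrow> ('tr::finite) state \<Rightarrow> 'tr upd set" where
  "controller_updates d_close d_open d_min ct s =
     {UDL x (ereal (ct + (d_min - d_close))) | x.
        TrackStatus s x = Coming \<and> Deadline s x = \<infinity>}
   \<union> {UDir Close | x. ereal ct = Deadline s x}
   \<union> {UDL x \<infinity> | x. TrackStatus s x = Empty \<and> Deadline s x < \<infinity>}
   \<union> {UDir Open | _::unit. DirV s = Close \<and> SafeToOpen d_open ct s}"

definition module_updates ::
  "real \<Rightarrow> real \<Rightarrow> real \<Rightarrow> agent \<Rightarrow> real \<Rightarrow> ('tr::finite) state \<Rightarrow> 'tr upd set" where
  "module_updates d_close d_open d_min a ct s =
     (case a of Gate \<Rightarrow> gate_updates s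
      | Controller \<Rightarrow> controller_updates d_close d_open d_min ct s)"

text \<open>Executing a set of modules simultaneously: each module contributes its
  update set if it is consistent (nothing happens for an inconsistent module).
  The two modules update disjoint locations.\<close>
definition exec_modules ::
  "real \<Rightarrow> real \<Rightarrow> real \<Rightarrow> agent set \<Rightarrow> real \<Rightarrow> ('tr::finite) state \<Rightarrow> 'tr state" where
  "exec_modules d_close d_open d_min M ct s =
     apply_upd (\<Union>a\<in>M. if consistent (module_updates d_close d_open d_min a ct s)
                       then module_updates d_close d_open d_min a ct s else {}) s"

definition enabled ::
  "real \<Rightarrow> real \<Rightarrow> real \<Rightarrow> agent \<Rightarrow> real \<Rightarrow> ('tr::finite) state \<Rightarrow> bool" where
  "enabled d_close d_open d_min a ct s \<longleftrightarrow>
     consistent (module_updates d_close d_open d_min a ct s) \<and>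
     (\<exists>u\<in>module_updates d_close d_open d_min a ct s. changes u s)"

text \<open>A run is given by \<rho> (the CT-free reducts); R(t) is \<rho>(t) with CT = t.
  Only t \<ge> 0 is relevant.\<close>

definition prerun :: "(real \<Rightarrow> 'tr state) \<Rightarrow> bool" where
  "prerun \<rho> \<longleftrightarrow> (\<forall>\<tau>>0. \<exists>(ts::nat \<Rightarrow> real) n. ts 0 = 0 \<and> ts n = \<tau> \<and>
      (\<forall>i<n. ts i < ts (Suc i)) \<and>
      (\<forall>i<n. \<forall>u v. ts i < u \<and> u < ts (Suc i) \<and> ts i < v \<and> v < ts (Suc i) \<longrightarrow> \<rho> u = \<rho> v))"

text \<open>\<rho>(t+) and \<rho>(t-): the constant value on a right/left neighbourhood.\<close>
definition rlim :: "(real \<Rightarrow> 'a) \<Rightarrow> real \<Rightarrow> 'a" where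
  "rlim f t = (THE a. \<exists>\<epsilon>>0. \<forall>u. t < u \<and> u < t + \<epsilon> \<longrightarrow> f u = a)"

definition llim :: "(real \<Rightarrow> 'a) \<Rightarrow> real \<Rightarrow> 'a" where
  "llim f t = (THE a. \<exists>\<epsilon>>0. \<forall>u. t - \<epsilon> < u \<and> u < t \<longrightarrow> f u = a)"

definition only_external_differ :: "'tr state \<Rightarrow> 'tr state \<Rightarrow> bool" where
  "only_external_differ s s' \<longleftrightarrow>
     Deadline s = Deadline s' \<and> DirV s = DirV s' \<and> GateStatus s = GateStatus s'"

definition is_run ::
  "real \<Rightarrow> real \<Rightarrow> real \<Rightarrow> (real \<Rightarrow> ('tr::finite) state) \<Rightarrow> bool" where
  "is_run d_close d_open d_min \<rho> \<longleftrightarrow> prerun \<rho> \<and>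
     (\<forall>t\<ge>0. rlim \<rho> t \<noteq> \<rho> t \<longrightarrow>
        (\<exists>M. rlim \<rho> t = exec_modules d_close d_open d_min M t (\<rho> t)) \<and>
        TrackStatus (rlim \<rho> t) = TrackStatus (\<rho> t)) \<and>
     (\<forall>t>0. \<rho> t \<noteq> llim \<rho> t \<longrightarrow> only_external_differ (\<rho> t) (llim \<rho> t))"

definition fires ::
  "real \<Rightarrow> real \<Rightarrow> real \<Rightarrow> (real \<Rightarrow> ('tr::finite) state) \<Rightarrow> agent \<Rightarrow> real \<Rightarrow> bool" where
  "fires d_close d_open d_min \<rho> a t \<longleftrightarrow> rlim \<rho> t \<noteq> \<rho> t \<and>
     (\<exists>M. a \<in> M \<and> rlim \<rho> t = exec_modules d_close d_open d_min M t (\<rho> t))"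

definition immediate ::
  "real \<Rightarrow> real \<Rightarrow> real \<Rightarrow> (real \<Rightarrow> ('tr::finite) state) \<Rightarrow> agent \<Rightarrow> bool" where
  "immediate d_close d_open d_min \<rho> a \<longleftrightarrow>
     (\<forall>t\<ge>0. enabled d_close d_open d_min a t (\<rho> t) \<longrightarrow> fires d_close d_open d_min \<rho> a t)"

definition bounded_agent ::
  "real \<Rightarrow> real \<Rightarrow> real \<Rightarrow> (real \<Rightarrow> ('tr::finite) state) \<Rightarrow> agent \<Rightarrow> bool" where
  "bounded_agent d_close d_open d_min \<rho> a \<longleftrightarrow>
     immediate d_close d_open d_min \<rho> a \<or>
     (\<exists>b>0. \<not> (\<exists>t\<ge>0.
        (\<forall>u. t < u \<and> u < t + b \<longrightarrow> enabled d_close d_open d_min a u (\<rho> u)) \<and>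
        (\<forall>u. t < u \<and> u < t + b \<longrightarrow> \<not> fires d_close d_open d_min \<rho> a u)))"

definition initial_state :: "('tr::finite) state \<Rightarrow> bool" where
  "initial_state s \<longleftrightarrow> (\<forall>x. TrackStatus s x = Empty \<and> Deadline s x = \<infinity>)"

definition seg_ok ::
  "real \<Rightarrow> real \<Rightarrow> (real \<Rightarrow> 'tr state) \<Rightarrow> 'tr \<Rightarrow> (nat \<Rightarrow> real) \<Rightarrow> nat \<Rightarrow> bool" where
  "seg_ok d_min d_max \<rho> x ts i \<longleftrightarrow>
     (\<forall>u. ts (3*i) \<le> u \<and> u < ts (3*i+1) \<longrightarrow> TrackStatus (\<rho> u) x = Empty) \<and>
     (\<forall>u. ts (3*i+1) \<le> u \<and> u < ts (3*i+2) \<longrightarrow> TrackStatus (\<rho> u) x = Coming) \<and>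
     d_min \<le> ts (3*i+2) - ts (3*i+1) \<and> ts (3*i+2) - ts (3*i+1) \<le> d_max \<and>
     (\<forall>u. ts (3*i+2) \<le> u \<and> u < ts (3*i+3) \<longrightarrow> TrackStatus (\<rho> u) x = Incrossing)"

definition train_motion :: "real \<Rightarrow> real \<Rightarrow> (real \<Rightarrow> 'tr state) \<Rightarrow> bool" where
  "train_motion d_min d_max \<rho> \<longleftrightarrow> (\<forall>x. \<exists>ts::nat \<Rightarrow> real. ts 0 = 0 \<and>
     ((strict_mono ts \<and> (\<forall>i. seg_ok d_min d_max \<rho> x ts i))
      \<or> (\<exists>k. 3 dvd k \<and> (\<forall>i<k. ts i < ts (Suc i)) \<and>
             (\<forall>i. 3*i+3 \<le> k \<longrightarrow> seg_ok d_min d_max \<rho> x ts i) \<and>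
             (\<forall>u. ts k \<le> u \<longrightarrow> TrackStatus (\<rho> u) x = Empty))))"

definition regular_run ::
  "real \<Rightarrow> real \<Rightarrow> real \<Rightarrow> real \<Rightarrow> (real \<Rightarrow> ('tr::finite) state) \<Rightarrow> bool" where
  "regular_run d_close d_open d_min d_max \<rho> \<longleftrightarrow>
     is_run d_close d_open d_min \<rho> \<and> initial_state (\<rho> 0) \<and>
     train_motion d_min d_max \<rho> \<and>
     immediate d_close d_open d_min \<rho> Controller \<and>
     bounded_agent d_close d_open d_min \<rho> Gate \<and>
     \<not> (\<exists>t\<ge>0. \<forall>u. t < u \<and> u < t + d_close \<longrightarrow>
            DirV (\<rho> u) = Close \<and> GateStatus (\<rho> u) = Opened) \<and>
     \<not> (\<exists>t\<ge>0. \<forall>u. t < u \<and> u < t + d_open \<longrightarrow>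
            DirV (\<rho> u) = Open \<and> GateStatus (\<rho> u) = Closed)"

end

theory Submission
  imports Defs
begin

(* SafeToOpen fails just before \<alpha> because of some track x, and since deadlines do not
   jump at \<alpha>, safety at \<alpha> forces x to become empty exactly at \<alpha>.  So a train
   arrived on x at some c \<le> \<alpha> - d_min, when the controller set x's deadline to c + W.
   This deadline expires at c + W < \<alpha> and SignalClose sets Dir to close; afterwards the
   occupied track x with its expired deadline keeps SafeToOpen false, so Dir is still close
   at \<alpha>.  No deadline expires at \<alpha> (it would belong to a track emptying at \<alpha>,
   whose deadline expired earlier), so SignalOpen fires at \<alpha>.  As long as SafeToOpen
   holds, every occupied track's deadline lies more than d_open ahead, so no deadline
   expires and nothing sets Dir back to close up to \<beta>, and just beyond. *)

lemma rlim_eqI: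
  assumes "0 < \<epsilon>" "\<forall>u. t < u \<and> u < t + \<epsilon> \<longrightarrow> f u = a"
  shows "rlim f t = a"
  unfolding rlim_def
proof (rule the_equality)
  show "\<exists>\<epsilon>>0. \<forall>u. t < u \<and> u < t + \<epsilon> \<longrightarrow> f u = a" using assms by auto
next
  fix b assume "\<exists>\<epsilon>>0. \<forall>u. t < u \<and> u < t + \<epsilon> \<longrightarrow> f u = b"
  then obtain \<epsilon>' where \<epsilon>': "0 < \<epsilon>'" "\<forall>u. t < u \<and> u < t + \<epsilon>' \<longrightarrow> f u = b" by auto
  define u where "u = t + min \<epsilon> \<epsilon>' / 2"
  have "t < u" "u < t + \<epsilon>" "u < t + \<epsilon>'" using \<open>0 < \<epsilon>\<close> \<epsilon>'(1) by (auto simp: u_def)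
  with \<epsilon>'(2) assms(2) have "f u = b" "f u = a" by auto
  then show "b = a" by simp
qed

lemma llim_eqI:
  assumes "0 < \<epsilon>" "\<forall>u. t - \<epsilon> < u \<and> u < t \<longrightarrow> f u = a"
  shows "llim f t = a"
  unfolding llim_def
proof (rule the_equality)
  show "\<exists>\<epsilon>>0. \<forall>u. t - \<epsilon> < u \<and> u < t \<longrightarrow> f u = a" using assms by auto
next
  fix b assume "\<exists>\<epsilon>>0. \<forall>u. t - \<epsilon> < u \<and> u < t \<longrightarrow> f u = b"
  then obtain \<epsilon>' where \<epsilon>': "0 < \<epsilon>'" "\<forall>u. t - \<epsilon>' < u \<and> u < t \<longrightarrow> f u = b" by auto
  define u where "u = t - min \<epsilon> \<epsilon>' / 2"
  have "t - \<epsilon> < u" "t - \<epsilon>' < u" "u < t" using \<open>0 < \<epsilon>\<close> \<epsilon>'(1) by (auto simp: u_def)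
  with \<epsilon>'(2) assms(2) have "f u = b" "f u = a" by auto
  then show "b = a" by simp
qed

lemma ex_bracketing_index:
  fixes f :: "nat \<Rightarrow> real"
  assumes "f 0 \<le> t" "t < f n"
  shows "\<exists>i<n. f i \<le> t \<and> t < f (Suc i)"
  using assms
proof (induction n)
  case (Suc n)
  then show ?case by (cases "f n \<le> t") (auto simp: less_Suc_eq)
qed simp

lemma prerun_right_const:
  assumes "prerun \<rho>" "0 \<le> t"
  shows "\<exists>\<epsilon>>0. \<forall>u. t < u \<and> u < t + \<epsilon> \<longrightarrow> \<rho> u = rlim \<rho> t"
proof -
  obtain ts :: "nat \<Rightarrow> real" and n where ts: "ts 0 = 0" "ts n = t + 1"
    and const: "\<forall>i<n. \<forall>u v. ts i < u \<and> u < ts (Suc i) \<and> ts i < v \<and> v < ts (Suc i) \<longrightarrow> \<rho> u = \<rho> v"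
    using assms unfolding prerun_def by (metis add_nonneg_pos zero_less_one)
  obtain i where i: "i < n" "ts i \<le> t" "t < ts (Suc i)"
    using ex_bracketing_index[of ts t n] ts assms(2) by auto
  define \<epsilon> where "\<epsilon> = ts (Suc i) - t"
  have "\<forall>u. t < u \<and> u < t + \<epsilon> \<longrightarrow> \<rho> u = \<rho> (t + \<epsilon> / 2)"
  proof (intro allI impI)
    fix u assume "t < u \<and> u < t + \<epsilon>"
    with i show "\<rho> u = \<rho> (t + \<epsilon> / 2)"
      unfolding \<epsilon>_def by (intro const[rule_format, OF i(1)]) (auto simp: field_simps)
  qed
  moreover have "0 < \<epsilon>" using i unfolding \<epsilon>_def by simp
  ultimately show ?thesis using rlim_eqI by metis
qed

lemma prerun_left_const:
  assumes "prerun \<rho>" "0 < t"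
  shows "\<exists>\<epsilon>>0. \<forall>u. t - \<epsilon> < u \<and> u < t \<longrightarrow> \<rho> u = llim \<rho> t"
proof -
  obtain ts :: "nat \<Rightarrow> real" and n where ts: "ts 0 = 0" "ts n = t" "\<forall>i<n. ts i < ts (Suc i)"
    and const: "\<forall>i<n. \<forall>u v. ts i < u \<and> u < ts (Suc i) \<and> ts i < v \<and> v < ts (Suc i) \<longrightarrow> \<rho> u = \<rho> v"
    using assms unfolding prerun_def by blast
  then obtain i where i: "n = Suc i" using assms(2) by (cases n) auto
  define \<epsilon> where "\<epsilon> = t - ts i"
  have "\<forall>u. t - \<epsilon> < u \<and> u < t \<longrightarrow> \<rho> u = \<rho> (t - \<epsilon> / 2)"
  proof (intro allI impI)
    fix u assume "t - \<epsilon> < u \<and> u < t"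
    with ts i show "\<rho> u = \<rho> (t - \<epsilon> / 2)"
      unfolding \<epsilon>_def by (intro const[rule_format, of i]) (auto simp: field_simps)
  qed
  moreover have "0 < \<epsilon>" using ts(3) i unfolding \<epsilon>_def by (simp flip: ts(2))
  ultimately show ?thesis using llim_eqI by metis
qed

lemma real_interval_induct:
  fixes a b :: real
  assumes "P a"
    and right: "\<And>s. a \<le> s \<Longrightarrow> s < b \<Longrightarrow> P s \<Longrightarrow> \<exists>\<epsilon>>0. \<forall>u. s < u \<and> u < s + \<epsilon> \<longrightarrow> P u"
    and left: "\<And>s. a < s \<Longrightarrow> s \<le> b \<Longrightarrow> \<exists>\<epsilon>>0. \<forall>u. s - \<epsilon> < u \<and> u < s \<longrightarrow> P u \<Longrightarrow> P s"
    and "a \<le> t" "t \<le> b"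
  shows "P t"
proof (rule ccontr)
  define F where "F = {s. a \<le> s \<and> s \<le> b \<and> \<not> P s}"
  assume "\<not> P t"
  with assms have "t \<in> F" unfolding F_def by auto
  have "bdd_below F" unfolding F_def by (rule bdd_belowI[of _ a]) auto
  define \<sigma> where "\<sigma> = Inf F"
  have lower: "\<sigma> \<le> s" if "s \<in> F" for s
    unfolding \<sigma>_def using that \<open>bdd_below F\<close> by (rule cInf_lower)
  have "a \<le> \<sigma>" "\<sigma> \<le> b"
    using \<open>t \<in> F\<close> lower[OF \<open>t \<in> F\<close>] unfolding \<sigma>_def F_def by (auto intro: cInf_greatest)
  have below: "P u" if "a \<le> u" "u < \<sigma>" for u
    using lower[of u] that \<open>\<sigma> \<le> b\<close> unfolding F_def by force
  show False
  proof (cases "P \<sigma>")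
    case True
    then have "\<sigma> \<notin> F" unfolding F_def by simp
    with \<open>t \<in> F\<close> have "\<sigma> \<noteq> t" by auto
    with \<open>t \<in> F\<close> lower[OF \<open>t \<in> F\<close>] have "\<sigma> < b" unfolding F_def by simp
    with right \<open>a \<le> \<sigma>\<close> True obtain \<epsilon> where \<epsilon>: "0 < \<epsilon>" "\<forall>u. \<sigma> < u \<and> u < \<sigma> + \<epsilon> \<longrightarrow> P u"
      by blast
    have "\<sigma> + \<epsilon> \<le> s" if "s \<in> F" for s
    proof -
      from that \<open>\<sigma> \<notin> F\<close> lower[OF that] have "\<sigma> < s" "\<not> P s"
        unfolding F_def by (auto simp: order.order_iff_strict)
      with \<epsilon>(2) show ?thesis by (meson not_le)
    qed
    then have "\<sigma> + \<epsilon> \<le> \<sigma>" unfolding \<sigma>_def using \<open>t \<in> F\<close> by (intro cInf_greatest) auto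
    with \<open>0 < \<epsilon>\<close> show False by simp
  next
    case False
    with \<open>P a\<close> \<open>a \<le> \<sigma>\<close> have "a < \<sigma>" using order.order_iff_strict by auto
    with below have "P \<sigma>" by (intro left \<open>\<sigma> \<le> b\<close>) (auto intro!: exI[of _ "\<sigma> - a"])
    with False show False by simp
  qed
qed

lemma holds_below_Sup_of_prefixes:
  fixes P :: "real \<Rightarrow> bool"
  assumes "a \<le> u" "u < b" "ereal b \<le> Sup {ereal t | t. a \<le> t \<and> (\<forall>v. a \<le> v \<and> v \<le> t \<longrightarrow> P v)}"
  shows "P u"
proof -
  from assms(2) have "ereal u < ereal b" by simp
  from this assms(3) have "ereal u < Sup {ereal t | t. a \<le> t \<and> (\<forall>v. a \<le> v \<and> v \<le> t \<longrightarrow> P v)}"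
    by (rule less_le_trans)
  with assms(1) show ?thesis by (auto simp: less_Sup_iff)
qed

section \<open>Executing the modules\<close>

lemma UDir_in_controller_updates_iff:
  "UDir d \<in> controller_updates d_close d_open d_min ct s \<longleftrightarrow>
     d = Close \<and> (\<exists>y. ereal ct = Deadline s y) \<or>
     d = Open \<and> DirV s = Close \<and> SafeToOpen d_open ct s"
  unfolding controller_updates_def by auto

lemma UDL_in_controller_updates_iff:
  "UDL x v \<in> controller_updates d_close d_open d_min ct s \<longleftrightarrow>
     TrackStatus s x = Coming \<and> Deadline s x = \<infinity> \<and> v = ereal (ct + (d_min - d_close)) \<or>
     TrackStatus s x = Empty \<and> Deadline s x \<noteq> \<infinity> \<and> v = \<infinity>"
  unfolding controller_updates_def by (auto simp: less_top)

lemma UGS_notin_controller_updates: "UGS g \<notin> controller_updates d_close d_open d_min ct s"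
  unfolding controller_updates_def by auto

lemma consistent_controller_updates_iff:
  "consistent (controller_updates d_close d_open d_min ct s) \<longleftrightarrow>
     \<not> ((\<exists>y. ereal ct = Deadline s y) \<and> DirV s = Close \<and> SafeToOpen d_open ct s)"
  (is "?lhs \<longleftrightarrow> \<not> ?clash")
proof
  assume ?lhs
  show "\<not> ?clash"
  proof
    assume ?clash
    then have "UDir Close \<in> controller_updates d_close d_open d_min ct s"
      "UDir Open \<in> controller_updates d_close d_open d_min ct s"
      by (auto simp: UDir_in_controller_updates_iff)
    with \<open>?lhs\<close> show False unfolding consistent_def by fastforce
  qed
next
  assume "\<not> ?clash"
  show ?lhs
    unfolding consistent_def
  proof (intro ballI impI)
    fix u v assume uv: "u \<in> controller_updates d_close d_open d_min ct s"
      "v \<in> controller_updates d_close d_open d_min ct s" "loc_of u = loc_of v"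
    show "u = v"
    proof (cases u)
      case (UDL x a)
      with uv obtain b where "v = UDL x b" by (cases v) auto
      with uv UDL show ?thesis by (simp add: UDL_in_controller_updates_iff) fastforce
    next
      case (UDir d)
      with uv obtain d' where "v = UDir d'" by (cases v) auto
      with uv UDir \<open>\<not> ?clash\<close> show ?thesis by (auto simp: UDir_in_controller_updates_iff)
    next
      case (UGS g)
      with uv show ?thesis by (simp add: UGS_notin_controller_updates)
    qed
  qed
qed

lemma consistent_UDir_unique:
  "consistent U \<Longrightarrow> UDir d \<in> U \<Longrightarrow> UDir d' \<in> U \<Longrightarrow> d' = d"
  unfolding consistent_def by force

lemma the_UDir_eq:
  "consistent U \<Longrightarrow> UDir d \<in> U \<Longrightarrow> (THE d. UDir d \<in> U) = d"
  unfolding consistent_def by (rule the_equality) force+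

lemma the_UDL_eq:
  "consistent U \<Longrightarrow> UDL x v \<in> U \<Longrightarrow> (THE v. UDL x v \<in> U) = v"
  unfolding consistent_def by (rule the_equality) force+

definition fired_updates ::
  "real \<Rightarrow> real \<Rightarrow> real \<Rightarrow> agent set \<Rightarrow> real \<Rightarrow> ('tr::finite) state \<Rightarrow> 'tr upd set" where
  "fired_updates d_close d_open d_min M ct s =
     (\<Union>a\<in>M. if consistent (module_updates d_close d_open d_min a ct s)
             then module_updates d_close d_open d_min a ct s else {})"

lemma exec_modules_eq_apply_upd:
  "exec_modules d_close d_open d_min M ct s = apply_upd (fired_updates d_close d_open d_min M ct s) s"
  by (simp add: exec_modules_def fired_updates_def)

lemma in_fired_updates_iff:
  "u \<in> fired_updates d_close d_open d_min M ct s \<longleftrightarrow>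
     (\<exists>a\<in>M. consistent (module_updates d_close d_open d_min a ct s) \<and>
             u \<in> module_updates d_close d_open d_min a ct s)"
  unfolding fired_updates_def by (auto split: if_splits)

lemma UDir_in_fired_updates_iff:
  "UDir d \<in> fired_updates d_close d_open d_min M ct s \<longleftrightarrow>
     Controller \<in> M \<and> consistent (controller_updates d_close d_open d_min ct s) \<and>
     UDir d \<in> controller_updates d_close d_open d_min ct s"
proof -
  have "UDir d \<in> module_updates d_close d_open d_min a ct s \<longleftrightarrow>
      a = Controller \<and> UDir d \<in> controller_updates d_close d_open d_min ct s" for a
    by (cases a) (auto simp: module_updates_def gate_updates_def)
  then show ?thesis by (auto simp: in_fired_updates_iff module_updates_def)
qed

lemma UDL_in_fired_updates_iff:
  "UDL x v \<in> fired_updates d_close d_open d_min M ct s \<longleftrightarrow>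
     Controller \<in> M \<and> consistent (controller_updates d_close d_open d_min ct s) \<and>
     UDL x v \<in> controller_updates d_close d_open d_min ct s"
proof -
  have "UDL x v \<in> module_updates d_close d_open d_min a ct s \<longleftrightarrow>
      a = Controller \<and> UDL x v \<in> controller_updates d_close d_open d_min ct s" for a
    by (cases a) (auto simp: module_updates_def gate_updates_def)
  then show ?thesis by (auto simp: in_fired_updates_iff module_updates_def)
qed

lemma DirV_exec_modules:
  "DirV (exec_modules d_close d_open d_min M ct s) =
     (if Controller \<in> M \<and> consistent (controller_updates d_close d_open d_min ct s) \<and>
         (\<exists>d. UDir d \<in> controller_updates d_close d_open d_min ct s)
      then THE d. UDir d \<in> controller_updates d_close d_open d_min ct s else DirV s)"
  unfolding exec_modules_eq_apply_upd apply_upd_def by (auto simp: UDir_in_fired_updates_iff)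

lemma Deadline_exec_modules:
  "Deadline (exec_modules d_close d_open d_min M ct s) x =
     (if Controller \<in> M \<and> consistent (controller_updates d_close d_open d_min ct s) \<and>
         (\<exists>v. UDL x v \<in> controller_updates d_close d_open d_min ct s)
      then THE v. UDL x v \<in> controller_updates d_close d_open d_min ct s else Deadline s x)"
  unfolding exec_modules_eq_apply_upd apply_upd_def by (auto simp: UDL_in_fired_updates_iff)

section \<open>Train motion\<close>

lemma train_motion_prefix:
  assumes "train_motion d_min d_max \<rho>" "0 < d_min"
  obtains ts :: "nat \<Rightarrow> real" and N where "ts 0 = 0" "3 dvd N" "\<forall>i<N. ts i < ts (Suc i)"
    "\<forall>i. 3*i+3 \<le> N \<longrightarrow> seg_ok d_min d_max \<rho> x ts i"
    "\<forall>u. ts N \<le> u \<and> u \<le> T \<longrightarrow> TrackStatus (\<rho> u) x = Empty"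
proof -
  obtain ts :: "nat \<Rightarrow> real" where "ts 0 = 0" and
    "strict_mono ts \<and> (\<forall>i. seg_ok d_min d_max \<rho> x ts i) \<or>
     (\<exists>k. 3 dvd k \<and> (\<forall>i<k. ts i < ts (Suc i)) \<and>
          (\<forall>i. 3*i+3 \<le> k \<longrightarrow> seg_ok d_min d_max \<rho> x ts i) \<and>
          (\<forall>u. ts k \<le> u \<longrightarrow> TrackStatus (\<rho> u) x = Empty))"
    using assms(1)[unfolded train_motion_def, rule_format, of x] by (elim exE conjE) (rule that)
  then show ?thesis
  proof (elim disjE exE conjE)
    assume "strict_mono ts" and seg: "\<forall>i. seg_ok d_min d_max \<rho> x ts i"
    have grow: "real i * d_min \<le> ts (3*i)" for i
    proof (induction i)
      case (Suc i)
      have "ts (3*i) < ts (3*i+1)" "ts (3*i+2) < ts (3*i+3)"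
        using \<open>strict_mono ts\<close> by (simp_all add: strict_mono_less)
      moreover have "d_min \<le> ts (3*i+2) - ts (3*i+1)" using seg unfolding seg_ok_def by blast
      ultimately show ?case using Suc by (simp add: algebra_simps)
    qed (simp add: \<open>ts 0 = 0\<close>)
    obtain j where "T < real j * d_min" using assms(2) ex_less_of_nat_mult by blast
    with grow[of j] have "T < ts (3*j)" by linarith
    moreover have "\<forall>i. ts i < ts (Suc i)" using \<open>strict_mono ts\<close> by (simp add: strict_mono_Suc_iff)
    ultimately show ?thesis using seg \<open>ts 0 = 0\<close> by (intro that[of ts "3*j"]) auto
  next
    fix k assume "3 dvd k" "\<forall>i<k. ts i < ts (Suc i)" "\<forall>i. 3*i+3 \<le> k \<longrightarrow> seg_ok d_min d_max \<rho> x ts i"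
      "\<forall>u. ts k \<le> u \<longrightarrow> TrackStatus (\<rho> u) x = Empty"
    with \<open>ts 0 = 0\<close> show ?thesis by (intro that[of ts k]) auto
  qed
qed

lemma emptying_moment_significant:
  fixes ts :: "nat \<Rightarrow> real"
  assumes "ts 0 = 0" "3 dvd N" "\<forall>i<N. ts i < ts (Suc i)"
    and seg: "\<forall>i. 3*i+3 \<le> N \<longrightarrow> seg_ok d_min d_max \<rho> x ts i"
    and tail: "\<forall>u. ts N \<le> u \<and> u \<le> \<alpha> \<longrightarrow> TrackStatus (\<rho> u) x = Empty"
    and "0 < \<alpha>" "0 < \<delta>" "\<forall>u. \<alpha> - \<delta> < u \<and> u < \<alpha> \<longrightarrow> TrackStatus (\<rho> u) x \<noteq> Empty"
    and "TrackStatus (\<rho> \<alpha>) x = Empty"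
  shows "\<exists>i. 3*i+3 \<le> N \<and> ts (3*i+3) = \<alpha>"
proof -
  obtain j where j: "ts (3*j) \<le> \<alpha>" "3*j = N \<or> 3*j+3 \<le> N \<and> \<alpha> < ts (3*j+3)"
  proof (cases "ts N \<le> \<alpha>")
    case True
    with \<open>3 dvd N\<close> show ?thesis by (intro that[of "N div 3"]) auto
  next
    case False
    with \<open>3 dvd N\<close> \<open>ts 0 = 0\<close> \<open>0 < \<alpha>\<close>
    obtain j where "j < N div 3" "ts (3*j) \<le> \<alpha>" "\<alpha> < ts (3*Suc j)"
      using ex_bracketing_index[of "\<lambda>j. ts (3*j)" \<alpha> "N div 3"] by auto
    with \<open>3 dvd N\<close> show ?thesis by (intro that[of j]) (auto simp: add.commute)
  qed
  have empty: "TrackStatus (\<rho> u) x = Empty" if "ts (3*j) \<le> u" "u \<le> \<alpha>" for u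
    using j(2)
  proof
    assume "3*j = N"
    with tail that show ?thesis by auto
  next
    assume "3*j+3 \<le> N \<and> \<alpha> < ts (3*j+3)"
    moreover from this seg have "seg_ok d_min d_max \<rho> x ts j" by blast
    ultimately have "\<alpha> < ts (3*j+1)"
      using \<open>TrackStatus (\<rho> \<alpha>) x = Empty\<close> unfolding seg_ok_def
      by (cases "\<alpha> < ts (3*j+2)") (auto simp: not_less)
    with \<open>seg_ok d_min d_max \<rho> x ts j\<close> that show ?thesis unfolding seg_ok_def by auto
  qed
  have "ts (3*j) = \<alpha>"
  proof (rule ccontr)
    assume "ts (3*j) \<noteq> \<alpha>"
    with j(1) have "ts (3*j) < \<alpha>" by simp
    define u where "u = max (ts (3*j)) (\<alpha> - \<delta> / 2)"
    have "ts (3*j) \<le> u" "\<alpha> - \<delta> < u" "u < \<alpha>"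
      using \<open>ts (3*j) < \<alpha>\<close> \<open>0 < \<delta>\<close> by (auto simp: u_def)
    with empty[of u] assms(8)[rule_format, of u] show False by simp
  qed
  moreover from this \<open>ts 0 = 0\<close> \<open>0 < \<alpha>\<close> obtain i where "j = Suc i" by (cases j) auto
  moreover have "3*j \<le> N" using j(2) by auto
  ultimately show ?thesis by (intro exI[of _ i]) (simp add: add.commute)
qed

lemma increasing_prefix_nonneg:
  fixes ts :: "nat \<Rightarrow> real"
  assumes "ts 0 = 0" "\<forall>i<N. ts i < ts (Suc i)" "k \<le> N"
  shows "0 \<le> ts k"
  using assms(3)
proof (induction k)
  case (Suc k)
  with assms(2) have "ts k < ts (Suc k)" by simp
  with Suc show ?case by simp
qed (simp add: assms(1))

lemma arrival_before_emptying:
  assumes "train_motion d_min d_max \<rho>" "0 < d_min" "0 < \<alpha>" "0 < \<delta>"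
    and "\<forall>u. \<alpha> - \<delta> < u \<and> u < \<alpha> \<longrightarrow> TrackStatus (\<rho> u) x \<noteq> Empty"
    and "TrackStatus (\<rho> \<alpha>) x = Empty"
  obtains c where "0 < c" "c + d_min \<le> \<alpha>" "TrackStatus (\<rho> c) x = Coming"
    "\<forall>u. c \<le> u \<and> u < \<alpha> \<longrightarrow> TrackStatus (\<rho> u) x \<noteq> Empty"
    "\<exists>\<epsilon>>0. \<forall>u. c - \<epsilon> < u \<and> u < c \<longrightarrow> TrackStatus (\<rho> u) x = Empty"
proof -
  obtain ts :: "nat \<Rightarrow> real" and N where ts: "ts 0 = 0" "3 dvd N" "\<forall>i<N. ts i < ts (Suc i)"
    "\<forall>i. 3*i+3 \<le> N \<longrightarrow> seg_ok d_min d_max \<rho> x ts i"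
    "\<forall>u. ts N \<le> u \<and> u \<le> \<alpha> \<longrightarrow> TrackStatus (\<rho> u) x = Empty"
    using train_motion_prefix[OF assms(1,2)] by metis
  then obtain i where i: "3*i+3 \<le> N" "ts (3*i+3) = \<alpha>"
    using emptying_moment_significant[OF ts assms(3-6)] by blast
  with ts have seg: "seg_ok d_min d_max \<rho> x ts i" by blast
  have "0 \<le> ts (3*i)" "ts (3*i) < ts (3*i+1)" "ts (3*i+2) < ts (3*i+3)"
    using increasing_prefix_nonneg[OF ts(1,3)] ts(3) i(1) by (auto simp: eval_nat_numeral)
  moreover have "d_min \<le> ts (3*i+2) - ts (3*i+1)" using seg unfolding seg_ok_def by blast
  moreover have "TrackStatus (\<rho> u) x \<noteq> Empty" if "ts (3*i+1) \<le> u" "u < \<alpha>" for u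
    using seg that i(2) unfolding seg_ok_def
    by (cases "u < ts (3*i+2)") (auto simp: not_less)
  ultimately show ?thesis
    using seg i(2) \<open>0 < d_min\<close> unfolding seg_ok_def
    by (intro that[of "ts (3*i+1)"] exI[of _ "ts (3*i+1) - ts (3*i)"]) auto
qed

section \<open>Runs with an immediate controller\<close>

definition deadlines_sound :: "'tr state \<Rightarrow> bool" where
  "deadlines_sound S \<longleftrightarrow>
     (\<forall>x. (TrackStatus S x = Empty \<longrightarrow> Deadline S x = \<infinity>) \<and>
          (TrackStatus S x = Coming \<longrightarrow> Deadline S x \<noteq> \<infinity>))"

locale controlled_run =
  fixes d_close d_open d_min :: real and \<rho> :: "real \<Rightarrow> ('tr::finite) state"
  assumes run: "is_run d_close d_open d_min \<rho>"
    and controller_immediate: "immediate d_close d_open d_min \<rho> Controller"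
begin

abbreviation ctrl_updates :: "real \<Rightarrow> 'tr upd set" where
  "ctrl_updates t \<equiv> controller_updates d_close d_open d_min t (\<rho> t)"

lemma right_const: "0 \<le> t \<Longrightarrow> \<exists>\<epsilon>>0. \<forall>u. t < u \<and> u < t + \<epsilon> \<longrightarrow> \<rho> u = rlim \<rho> t"
  using prerun_right_const run unfolding is_run_def by blast

lemma left_const: "0 < t \<Longrightarrow> \<exists>\<epsilon>>0. \<forall>u. t - \<epsilon> < u \<and> u < t \<longrightarrow> \<rho> u = llim \<rho> t"
  using prerun_left_const run unfolding is_run_def by blast

lemma rlim_cases:
  "0 \<le> t \<Longrightarrow> rlim \<rho> t = \<rho> t \<or> (\<exists>M. rlim \<rho> t = exec_modules d_close d_open d_min M t (\<rho> t))"
  using run unfolding is_run_def by blast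

lemma TrackStatus_rlim: "0 \<le> t \<Longrightarrow> TrackStatus (rlim \<rho> t) = TrackStatus (\<rho> t)"
  using run unfolding is_run_def by metis

lemma only_external_differ_llim: "0 < t \<Longrightarrow> only_external_differ (\<rho> t) (llim \<rho> t)"
  using run unfolding is_run_def only_external_differ_def by metis

lemma llim_property:
  assumes "0 < t" "0 < \<epsilon>" "\<forall>u. t - \<epsilon> < u \<and> u < t \<longrightarrow> P (\<rho> u)"
  shows "P (llim \<rho> t)"
proof -
  obtain \<epsilon>' where \<epsilon>': "0 < \<epsilon>'" "\<forall>u. t - \<epsilon>' < u \<and> u < t \<longrightarrow> \<rho> u = llim \<rho> t"
    using left_const[OF assms(1)] by blast
  define u where "u = t - min \<epsilon> \<epsilon>' / 2"
  have "t - \<epsilon> < u" "t - \<epsilon>' < u" "u < t" using assms(2) \<epsilon>'(1) by (auto simp: u_def)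
  with \<epsilon>'(2) assms(3) show ?thesis by metis
qed

lemma rlim_property_right:
  "0 \<le> t \<Longrightarrow> P (rlim \<rho> t) \<Longrightarrow> \<exists>\<epsilon>>0. \<forall>u. t < u \<and> u < t + \<epsilon> \<longrightarrow> P (\<rho> u)"
  using right_const by metis

lemma Controller_fires:
  "0 \<le> t \<Longrightarrow> enabled d_close d_open d_min Controller t (\<rho> t) \<Longrightarrow>
     \<exists>M. Controller \<in> M \<and> rlim \<rho> t = exec_modules d_close d_open d_min M t (\<rho> t)"
  using controller_immediate unfolding immediate_def fires_def by blast

lemma Controller_disabled_on_constancy:
  assumes "0 \<le> t" "\<forall>v. t < v \<and> v < t' \<longrightarrow> \<rho> v = S" "t < u" "u < t'"
  shows "\<not> enabled d_close d_open d_min Controller u S"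
proof
  assume "enabled d_close d_open d_min Controller u S"
  moreover have "\<rho> u = S" using assms by auto
  ultimately have "rlim \<rho> u \<noteq> S"
    using controller_immediate assms(1,3) unfolding immediate_def fires_def by auto
  moreover have "rlim \<rho> u = S"
    by (rule rlim_eqI[of "t' - u"]) (use assms in auto)
  ultimately show False by simp
qed

(* A generic moment of the interval is no deadline, so the controller is consistent there;
   being immediate but not firing, it has no pending SetDeadline or ClearDeadline. *)
lemma deadlines_sound_on_constancy:
  assumes "0 \<le> t" "t < t'" "\<forall>v. t < v \<and> v < t' \<longrightarrow> \<rho> v = S"
  shows "deadlines_sound S"
proof -
  have "finite (real_of_ereal ` range (Deadline S))" by simp
  moreover have "infinite {t<..<t'}" using assms(2) by simp
  ultimately obtain u where u: "t < u" "u < t'" "u \<notin> real_of_ereal ` range (Deadline S)"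
    by (metis Diff_infinite_finite Diff_iff ex_in_conv finite.emptyI greaterThanLessThan_iff)
  then have no_due: "\<forall>y. ereal u \<noteq> Deadline S y" by (metis rangeI image_eqI real_of_ereal.simps(1))
  then have "consistent (controller_updates d_close d_open d_min u S)"
    by (simp add: consistent_controller_updates_iff)
  with Controller_disabled_on_constancy[OF assms(1,3) u(1,2)]
  have unchanged: "\<not> changes upd S" if "upd \<in> controller_updates d_close d_open d_min u S" for upd
    using that unfolding enabled_def module_updates_def by auto
  show ?thesis
    unfolding deadlines_sound_def
  proof (intro allI conjI impI)
    fix x assume "TrackStatus S x = Empty"
    then show "Deadline S x = \<infinity>"
      using unchanged[of "UDL x \<infinity>"] by (auto simp: UDL_in_controller_updates_iff)
  next
    fix x assume "TrackStatus S x = Coming"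
    then show "Deadline S x \<noteq> \<infinity>"
      using unchanged[of "UDL x (ereal (u + (d_min - d_close)))"]
      by (auto simp: UDL_in_controller_updates_iff)
  qed
qed

lemma deadlines_sound_rlim: "0 \<le> t \<Longrightarrow> deadlines_sound (rlim \<rho> t)"
  using right_const deadlines_sound_on_constancy by (metis less_add_same_cancel1)

lemma deadlines_sound_llim:
  assumes "0 < t" shows "deadlines_sound (llim \<rho> t)"
proof -
  obtain \<epsilon> where "0 < \<epsilon>" "\<forall>u. t - \<epsilon> < u \<and> u < t \<longrightarrow> \<rho> u = llim \<rho> t"
    using left_const[OF assms] by blast
  with assms show ?thesis
    by (intro deadlines_sound_on_constancy[of "max 0 (t - \<epsilon>)" t]) auto
qed

lemma DirV_rlim_cases:
  assumes "0 \<le> t"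
  shows "DirV (rlim \<rho> t) = DirV (\<rho> t) \<or>
    consistent (ctrl_updates t) \<and> UDir (DirV (rlim \<rho> t)) \<in> ctrl_updates t"
  using rlim_cases[OF assms]
proof
  assume "\<exists>M. rlim \<rho> t = exec_modules d_close d_open d_min M t (\<rho> t)"
  then show ?thesis
    by (auto simp: DirV_exec_modules the_UDir_eq split: if_splits)
qed simp

lemma DirV_rlim_unchanged:
  assumes "0 \<le> t" "\<And>d. UDir d \<in> ctrl_updates t \<Longrightarrow> d = DirV (\<rho> t)"
  shows "DirV (rlim \<rho> t) = DirV (\<rho> t)"
  using DirV_rlim_cases[OF assms(1)] assms(2) by blast

lemma DirV_rlim_signalled:
  assumes "0 \<le> t" "consistent (ctrl_updates t)" "UDir d \<in> ctrl_updates t"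
  shows "DirV (rlim \<rho> t) = d"
proof (cases "d = DirV (\<rho> t)")
  case True
  with DirV_rlim_cases[OF assms(1)] assms(3) show ?thesis
    using consistent_UDir_unique by metis
next
  case False
  with assms(2,3) have "enabled d_close d_open d_min Controller t (\<rho> t)"
    unfolding enabled_def module_updates_def by force
  with Controller_fires[OF assms(1)] assms(2,3) show ?thesis
    by (auto simp: DirV_exec_modules the_UDir_eq)
qed

lemma DirV_rlim_Close:
  assumes "0 \<le> t" "UDir Close \<in> ctrl_updates t"
  shows "DirV (rlim \<rho> t) = Close"
proof (cases "consistent (ctrl_updates t)")
  case True
  with assms show ?thesis by (intro DirV_rlim_signalled)
next
  case False
  then have "DirV (\<rho> t) = Close" by (simp add: consistent_controller_updates_iff)
  with False show ?thesis using DirV_rlim_cases[OF assms(1)] by simp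
qed

lemma Deadline_rlim_cases:
  assumes "0 \<le> t"
  shows "Deadline (rlim \<rho> t) x = Deadline (\<rho> t) x \<or> UDL x (Deadline (rlim \<rho> t) x) \<in> ctrl_updates t"
  using rlim_cases[OF assms]
proof
  assume "\<exists>M. rlim \<rho> t = exec_modules d_close d_open d_min M t (\<rho> t)"
  then show ?thesis
    by (auto simp: Deadline_exec_modules the_UDL_eq split: if_splits)
qed simp

lemma Deadline_rlim_unchanged:
  assumes "0 \<le> t" "TrackStatus (\<rho> t) x \<noteq> Empty" "Deadline (\<rho> t) x \<noteq> \<infinity>"
  shows "Deadline (rlim \<rho> t) x = Deadline (\<rho> t) x"
  using Deadline_rlim_cases[OF assms(1), of x] assms(2,3)
  by (auto simp: UDL_in_controller_updates_iff)

lemma Deadline_rlim_set: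
  assumes "0 \<le> t" "TrackStatus (\<rho> t) x = Coming" "Deadline (\<rho> t) x = \<infinity>"
  shows "Deadline (rlim \<rho> t) x = ereal (t + (d_min - d_close))"
proof -
  have "Deadline (rlim \<rho> t) x \<noteq> \<infinity>"
    using deadlines_sound_rlim[OF assms(1)] TrackStatus_rlim[OF assms(1)] assms(2)
    unfolding deadlines_sound_def by simp
  with Deadline_rlim_cases[OF assms(1), of x] assms(2,3) show ?thesis
    by (auto simp: UDL_in_controller_updates_iff)
qed

lemma internal_persistence:
  assumes "0 \<le> a" "P (rlim \<rho> a)"
    and internal: "\<And>S S'. only_external_differ S S' \<Longrightarrow> P S' \<Longrightarrow> P S"
    and step: "\<And>t. a < t \<Longrightarrow> t < b \<Longrightarrow> P (\<rho> t) \<Longrightarrow> P (rlim \<rho> t)"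
    and "a < t" "t \<le> b"
  shows "P (\<rho> t)"
proof -
  obtain \<epsilon> where \<epsilon>: "0 < \<epsilon>" "\<forall>u. a < u \<and> u < a + \<epsilon> \<longrightarrow> \<rho> u = rlim \<rho> a"
    using right_const[OF assms(1)] by blast
  define c where "c = a + min \<epsilon> (t - a) / 2"
  have c: "a < c" "c < a + \<epsilon>" "c \<le> t" using \<epsilon>(1) \<open>a < t\<close> by (auto simp: c_def min_def field_simps)
  show ?thesis
  proof (rule real_interval_induct[where P = "\<lambda>u. P (\<rho> u)", OF _ _ _ \<open>c \<le> t\<close> order_refl])
    show "P (\<rho> c)" using \<epsilon>(2) c assms(2) by simp
  next
    fix s assume "c \<le> s" "s < t" "P (\<rho> s)"
    with c \<open>0 \<le> a\<close> \<open>t \<le> b\<close> show "\<exists>\<epsilon>>0. \<forall>u. s < u \<and> u < s + \<epsilon> \<longrightarrow> P (\<rho> u)"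
      by (intro rlim_property_right step) auto
  next
    fix s assume "c < s" "s \<le> t" "\<exists>\<epsilon>>0. \<forall>u. s - \<epsilon> < u \<and> u < s \<longrightarrow> P (\<rho> u)"
    moreover have "0 < s" using \<open>c < s\<close> c \<open>0 \<le> a\<close> by simp
    ultimately have "P (llim \<rho> s)" using llim_property by blast
    with internal only_external_differ_llim[OF \<open>0 < s\<close>] show "P (\<rho> s)" by blast
  qed
qed

lemma track_empties_when_SafeToOpen_starts:
  assumes "0 < \<alpha>" "\<exists>\<epsilon>>0. \<forall>u. \<alpha> - \<epsilon> < u \<and> u < \<alpha> \<longrightarrow> \<not> SafeToOpen d_open u (\<rho> u)"
    "SafeToOpen d_open \<alpha> (\<rho> \<alpha>)"
  obtains x \<delta> where "0 < \<delta>" "\<forall>u. \<alpha> - \<delta> < u \<and> u < \<alpha> \<longrightarrow> TrackStatus (\<rho> u) x \<noteq> Empty"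
    "TrackStatus (\<rho> \<alpha>) x = Empty"
proof -
  obtain \<epsilon> where \<epsilon>: "0 < \<epsilon>" "\<forall>u. \<alpha> - \<epsilon> < u \<and> u < \<alpha> \<longrightarrow> \<not> SafeToOpen d_open u (\<rho> u)"
    using assms(2) by blast
  obtain \<delta> where \<delta>: "0 < \<delta>" "\<forall>u. \<alpha> - \<delta> < u \<and> u < \<alpha> \<longrightarrow> \<rho> u = llim \<rho> \<alpha>"
    using left_const[OF assms(1)] by blast
  define u where "u = \<alpha> - min \<epsilon> \<delta> / 2"
  have u: "\<alpha> - \<epsilon> < u" "\<alpha> - \<delta> < u" "u < \<alpha>" using \<epsilon>(1) \<delta>(1) by (auto simp: u_def)
  with \<epsilon>(2)[rule_format, of u] \<delta>(2)[rule_format, of u]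
  have "\<not> SafeToOpen d_open u (llim \<rho> \<alpha>)" by simp
  then obtain x where x: "TrackStatus (llim \<rho> \<alpha>) x \<noteq> Empty"
    "Deadline (llim \<rho> \<alpha>) x \<le> ereal (u + d_open)"
    unfolding SafeToOpen_def safe_track_def by (auto simp: not_less)
  have "ereal (u + d_open) < ereal (\<alpha> + d_open)" using u(3) by simp
  with x(2) have "Deadline (llim \<rho> \<alpha>) x < ereal (\<alpha> + d_open)" by (rule le_less_trans)
  moreover have "Deadline (\<rho> \<alpha>) x = Deadline (llim \<rho> \<alpha>) x"
    using only_external_differ_llim[OF assms(1)] unfolding only_external_differ_def by simp
  ultimately have "\<not> ereal (\<alpha> + d_open) < Deadline (\<rho> \<alpha>) x" by simp
  with assms(3) have "TrackStatus (\<rho> \<alpha>) x = Empty"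
    unfolding SafeToOpen_def safe_track_def by blast
  with \<delta> x(1) show ?thesis by (intro that) auto
qed

lemma deadline_not_due_after_safe:
  assumes "0 < d_open" "0 < s" "0 < \<epsilon>" "\<forall>u. s - \<epsilon> < u \<and> u < s \<longrightarrow> SafeToOpen d_open u (\<rho> u)"
  shows "ereal s \<noteq> Deadline (\<rho> s) y"
proof
  assume "ereal s = Deadline (\<rho> s) y"
  then have due: "Deadline (llim \<rho> s) y = ereal s"
    using only_external_differ_llim[OF assms(2)] unfolding only_external_differ_def by simp
  then have occupied: "TrackStatus (llim \<rho> s) y \<noteq> Empty"
    using deadlines_sound_llim[OF assms(2)] unfolding deadlines_sound_def by auto
  obtain \<epsilon>' where \<epsilon>': "0 < \<epsilon>'" "\<forall>u. s - \<epsilon>' < u \<and> u < s \<longrightarrow> \<rho> u = llim \<rho> s"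
    using left_const[OF assms(2)] by blast
  define u where "u = s - min d_open (min \<epsilon> \<epsilon>') / 2"
  have u: "s - \<epsilon> < u" "s - \<epsilon>' < u" "u < s" "s < u + d_open"
    using assms(1,3) \<epsilon>'(1) by (auto simp: u_def)
  with assms(4)[rule_format, of u] \<epsilon>'(2)[rule_format, of u]
  have "SafeToOpen d_open u (llim \<rho> s)" by simp
  with due occupied have "u + d_open < s"
    unfolding SafeToOpen_def safe_track_def by fastforce
  with u(4) show False by simp
qed

lemma DirV_Open_while_safe:
  assumes "0 < d_open" "0 \<le> a" "a \<le> b" "DirV (rlim \<rho> a) = Open"
    and safe: "\<forall>u. a < u \<and> u < b \<longrightarrow> SafeToOpen d_open u (\<rho> u)"
  shows "\<forall>t. a < t \<and> t \<le> b \<longrightarrow> DirV (\<rho> t) = Open" and "DirV (rlim \<rho> b) = Open"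
proof -
  have keep: "DirV (rlim \<rho> t) = Open" if "a < t" "t \<le> b" "DirV (\<rho> t) = Open" for t
  proof -
    have "\<forall>y. ereal t \<noteq> Deadline (\<rho> t) y"
      using safe that assms(1,2) by (intro allI deadline_not_due_after_safe[of t "t - a"]) auto
    with that assms(2) show ?thesis
      by (intro DirV_rlim_unchanged[THEN trans]) (auto simp: UDir_in_controller_updates_iff)
  qed
  show opened: "\<forall>t. a < t \<and> t \<le> b \<longrightarrow> DirV (\<rho> t) = Open"
  proof (intro allI impI)
    fix t assume "a < t \<and> t \<le> b"
    with assms(2,4) keep show "DirV (\<rho> t) = Open"
      by (intro internal_persistence[where P = "\<lambda>S. DirV S = Open" and b = t])
        (auto simp: only_external_differ_def)
  qed
  show "DirV (rlim \<rho> b) = Open"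
    using assms(3,4) keep opened by (cases "a = b") auto
qed

lemma DirV_rlim_Open:
  assumes "0 \<le> t" "DirV (\<rho> t) = Close" "SafeToOpen d_open t (\<rho> t)"
    "\<forall>y. ereal t \<noteq> Deadline (\<rho> t) y"
  shows "DirV (rlim \<rho> t) = Open"
  using assms
  by (intro DirV_rlim_signalled)
    (auto simp: consistent_controller_updates_iff UDir_in_controller_updates_iff)

end

section \<open>Railroad crossing runs\<close>

locale railroad_run = controlled_run +
  fixes d_max :: real
  assumes train_motion: "train_motion d_min d_max \<rho>"
    and d_close_pos: "0 < d_close" and d_close_less_d_min: "d_close < d_min"
    and d_open_pos: "0 < d_open"
begin

lemma deadline_history:
  assumes "0 < \<alpha>" "0 < \<delta>" "\<forall>u. \<alpha> - \<delta> < u \<and> u < \<alpha> \<longrightarrow> TrackStatus (\<rho> u) x \<noteq> Empty"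
    "TrackStatus (\<rho> \<alpha>) x = Empty"
  obtains c where "0 < c" "c + d_min \<le> \<alpha>"
    "\<forall>s. c < s \<and> s < \<alpha> \<longrightarrow>
       Deadline (\<rho> s) x = ereal (c + (d_min - d_close)) \<and> TrackStatus (\<rho> s) x \<noteq> Empty"
proof -
  have "0 < d_min" using d_close_pos d_close_less_d_min by simp
  obtain c where c: "0 < c" "c + d_min \<le> \<alpha>" "TrackStatus (\<rho> c) x = Coming"
    "\<forall>u. c \<le> u \<and> u < \<alpha> \<longrightarrow> TrackStatus (\<rho> u) x \<noteq> Empty"
    "\<exists>\<epsilon>>0. \<forall>u. c - \<epsilon> < u \<and> u < c \<longrightarrow> TrackStatus (\<rho> u) x = Empty"
    using arrival_before_emptying[OF train_motion \<open>0 < d_min\<close> assms] by blast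
  define D where "D = ereal (c + (d_min - d_close))"
  have "TrackStatus (llim \<rho> c) x = Empty"
    using c(5) llim_property[OF c(1), where P = "\<lambda>S. TrackStatus S x = Empty"] by blast
  then have "Deadline (llim \<rho> c) x = \<infinity>"
    using deadlines_sound_llim[OF c(1)] unfolding deadlines_sound_def by blast
  then have "Deadline (\<rho> c) x = \<infinity>"
    using only_external_differ_llim[OF c(1)] unfolding only_external_differ_def by simp
  with c(1,3) have "Deadline (rlim \<rho> c) x = D"
    unfolding D_def by (intro Deadline_rlim_set) auto
  have "Deadline (\<rho> s) x = D" if "c < s" "s < \<alpha>" for s
  proof (rule internal_persistence[where P = "\<lambda>S. Deadline S x = D" and b = s])
    fix t assume "c < t" "t < s" "Deadline (\<rho> t) x = D"
    with c(1,4) \<open>s < \<alpha>\<close> show "Deadline (rlim \<rho> t) x = D"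
      using Deadline_rlim_unchanged[of t x] by (simp add: D_def)
  qed (use that c(1) \<open>Deadline (rlim \<rho> c) x = D\<close> in \<open>auto simp: only_external_differ_def\<close>)
  with c show ?thesis unfolding D_def by (intro that) auto
qed

lemma DirV_Close_when_track_empties:
  assumes "0 < \<alpha>" "0 < \<delta>" "\<forall>u. \<alpha> - \<delta> < u \<and> u < \<alpha> \<longrightarrow> TrackStatus (\<rho> u) x \<noteq> Empty"
    "TrackStatus (\<rho> \<alpha>) x = Empty"
  shows "DirV (\<rho> \<alpha>) = Close"
proof -
  obtain c where c: "0 < c" "c + d_min \<le> \<alpha>"
    "\<forall>s. c < s \<and> s < \<alpha> \<longrightarrow>
       Deadline (\<rho> s) x = ereal (c + (d_min - d_close)) \<and> TrackStatus (\<rho> s) x \<noteq> Empty"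
    using deadline_history[OF assms] by blast
  define \<tau> where "\<tau> = c + (d_min - d_close)"
  have \<tau>: "c < \<tau>" "\<tau> < \<alpha>" using c(2) d_close_pos d_close_less_d_min by (auto simp: \<tau>_def)
  with c(3) have "ereal \<tau> = Deadline (\<rho> \<tau>) x" unfolding \<tau>_def by simp
  then have "UDir Close \<in> ctrl_updates \<tau>" by (auto simp: UDir_in_controller_updates_iff)
  with c(1) \<tau>(1) have closing: "DirV (rlim \<rho> \<tau>) = Close" by (intro DirV_rlim_Close) auto
  have unsafe: "\<not> SafeToOpen d_open t (\<rho> t)" if "\<tau> < t" "t < \<alpha>" for t
    using that c(3) \<tau>(1) d_open_pos unfolding SafeToOpen_def safe_track_def \<tau>_def by force
  have closed: "DirV (\<rho> t) = Close" if "\<tau> < t" "t < \<alpha>" for t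
  proof (rule internal_persistence[where P = "\<lambda>S. DirV S = Close" and b = t])
    fix v assume "\<tau> < v" "v < t" "DirV (\<rho> v) = Close"
    with \<open>t < \<alpha>\<close> unsafe[of v] c(1) \<tau>(1) show "DirV (rlim \<rho> v) = Close"
      using DirV_rlim_unchanged[of v] by (auto simp: UDir_in_controller_updates_iff)
  qed (use that c(1) \<tau>(1) closing in \<open>auto simp: only_external_differ_def\<close>)
  then have "DirV (llim \<rho> \<alpha>) = Close"
    using llim_property[OF assms(1), of "\<alpha> - \<tau>" "\<lambda>S. DirV S = Close"] \<tau> by simp
  then show ?thesis
    using only_external_differ_llim[OF assms(1)] unfolding only_external_differ_def by simp
qed

lemma deadline_not_due_when_safe:
  assumes "0 < \<alpha>" "SafeToOpen d_open \<alpha> (\<rho> \<alpha>)"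
  shows "ereal \<alpha> \<noteq> Deadline (\<rho> \<alpha>) y"
proof
  assume due: "ereal \<alpha> = Deadline (\<rho> \<alpha>) y"
  then have due_before: "Deadline (llim \<rho> \<alpha>) y = ereal \<alpha>"
    using only_external_differ_llim[OF assms(1)] unfolding only_external_differ_def by simp
  then have "TrackStatus (llim \<rho> \<alpha>) y \<noteq> Empty"
    using deadlines_sound_llim[OF assms(1)] unfolding deadlines_sound_def by auto
  moreover obtain \<delta> where \<delta>: "0 < \<delta>" "\<forall>u. \<alpha> - \<delta> < u \<and> u < \<alpha> \<longrightarrow> \<rho> u = llim \<rho> \<alpha>"
    using left_const[OF assms(1)] by blast
  moreover have "\<not> ereal (\<alpha> + d_open) < Deadline (\<rho> \<alpha>) y"
    using due[symmetric] d_open_pos by simp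
  with assms(2) have "TrackStatus (\<rho> \<alpha>) y = Empty"
    unfolding SafeToOpen_def safe_track_def by blast
  ultimately have "\<forall>u. \<alpha> - \<delta> < u \<and> u < \<alpha> \<longrightarrow> TrackStatus (\<rho> u) y \<noteq> Empty"
    "TrackStatus (\<rho> \<alpha>) y = Empty" by auto
  then obtain c where c: "0 < c" "c + d_min \<le> \<alpha>"
    "\<forall>s. c < s \<and> s < \<alpha> \<longrightarrow>
       Deadline (\<rho> s) y = ereal (c + (d_min - d_close)) \<and> TrackStatus (\<rho> s) y \<noteq> Empty"
    using deadline_history[OF assms(1) \<delta>(1)] by blast
  then have "Deadline (llim \<rho> \<alpha>) y = ereal (c + (d_min - d_close))"
    using llim_property[OF assms(1), of "\<alpha> - c" "\<lambda>S. Deadline S y = ereal (c + (d_min - d_close))"]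
      d_close_pos d_close_less_d_min by auto
  with due_before c(2) d_close_pos show False by simp
qed

end

theorem mainTheorem7:
  fixes d_close d_open d_min d_max :: real
    and \<rho> :: "real \<Rightarrow> ('tr::finite) state"
    and \<alpha> :: real
  assumes dpos: "0 < d_close" "0 < d_open" "0 < d_min" "0 < d_max"
      "d_close < d_min" "d_min \<le> d_max"
    and reg: "regular_run d_close d_open d_min d_max \<rho>"
    and alpha_pos: "0 < \<alpha>"
    and fails_before: "\<exists>\<epsilon>>0. \<forall>u. \<alpha> - \<epsilon> < u \<and> u < \<alpha> \<longrightarrow> \<not> SafeToOpen d_open u (\<rho> u)"
    and holds_at: "SafeToOpen d_open \<alpha> (\<rho> \<alpha>)"
  defines "\<beta> \<equiv> Sup {ereal t | t. \<alpha> \<le> t \<and>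
                    (\<forall>u. \<alpha> \<le> u \<and> u \<le> t \<longrightarrow> SafeToOpen d_open u (\<rho> u))}"
  shows "DirV (\<rho> \<alpha>) = Close \<and>
         (\<forall>t. \<alpha> < t \<and> ereal t \<le> \<beta> \<longrightarrow> DirV (\<rho> t) = Open) \<and>
         (\<beta> \<noteq> \<infinity> \<longrightarrow> (\<exists>\<epsilon>>0. \<forall>u. real_of_ereal \<beta> < u \<and> u < real_of_ereal \<beta> + \<epsilon> \<longrightarrow>
                                   DirV (\<rho> u) = Open))"
proof -
  interpret railroad_run d_close d_open d_min \<rho> d_max
    using reg dpos unfolding regular_run_def by unfold_locales auto
  obtain x \<delta> where "0 < \<delta>" "\<forall>u. \<alpha> - \<delta> < u \<and> u < \<alpha> \<longrightarrow> TrackStatus (\<rho> u) x \<noteq> Empty"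
    "TrackStatus (\<rho> \<alpha>) x = Empty"
    using track_empties_when_SafeToOpen_starts[OF alpha_pos fails_before holds_at] by blast
  then have Close_at: "DirV (\<rho> \<alpha>) = Close"
    by (rule DirV_Close_when_track_empties[OF alpha_pos])
  have Open_after: "DirV (rlim \<rho> \<alpha>) = Open"
    using alpha_pos Close_at holds_at deadline_not_due_when_safe[OF alpha_pos holds_at]
    by (intro DirV_rlim_Open) auto
  have "ereal \<alpha> \<le> \<beta>"
    unfolding \<beta>_def using holds_at by (intro Sup_upper) auto
  have safe: "\<forall>u. \<alpha> < u \<and> u < b \<longrightarrow> SafeToOpen d_open u (\<rho> u)" if "ereal b \<le> \<beta>" for b
    using that holds_below_Sup_of_prefixes[where P = "\<lambda>u. SafeToOpen d_open u (\<rho> u)" and a = \<alpha>]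
    unfolding \<beta>_def by (meson less_imp_le)
  show ?thesis
  proof (intro conjI allI impI)
    fix t assume "\<alpha> < t \<and> ereal t \<le> \<beta>"
    with DirV_Open_while_safe(1)[OF d_open_pos _ _ Open_after safe[of t]] alpha_pos
    show "DirV (\<rho> t) = Open" by auto
  next
    assume "\<beta> \<noteq> \<infinity>"
    with \<open>ereal \<alpha> \<le> \<beta>\<close> obtain b where "\<beta> = ereal b" "\<alpha> \<le> b" by (cases \<beta>) auto
    with DirV_Open_while_safe(2)[OF d_open_pos _ _ Open_after safe[of b]] alpha_pos
    show "\<exists>\<epsilon>>0. \<forall>u. real_of_ereal \<beta> < u \<and> u < real_of_ereal \<beta> + \<epsilon> \<longrightarrow> DirV (\<rho> u) = Open"
      using rlim_property_right[of b "\<lambda>S. DirV S = Open"] by simp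
  qed (fact Close_at)
qed

end
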